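(* Let \(a,b,c\) be positive integers, \(m\) a positive integer that is not a perfect square, with \(\gcd(a,b^2-c^2m)=1\), and let \(A,B\in\mathbb Z\). Let \((\bar x,\bar y,\bar z,\bar w)\) be the unique element of \(\mathbb Z^4\) with \(0\leq\bar z,\bar w<a\) satisfying \(a(\bar x+\bar y\sqrt m)+(b+c\sqrt m)(\bar z+\bar w\sqrt m)=A+B\sqrt m\). Then the equation \(a(x+y\sqrt m)+(b+c\sqrt m)(z+w\sqrt m)=A+B\sqrt m\) has a solution with \(x,y,z,w\in\mathbb N\) if and only if \(\bar x\geq 0\) and \(\bar y\geq 0\).
   Context: \(\mathbb N\) denotes the set of non-negative integers. (Existence and uniqueness of \((\bar x,\bar y,\bar z,\bar w)\) under the stated hypotheses may be assumed.) *)

theory Defs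
  imports Complex_Main
begin

end

theory Submission
  imports Defs
begin

text \<open>Since \<open>\<surd>m\<close> is irrational, comparing coefficients turns the equation into the linear
  system \<open>a x + b z + c m w = A\<close>, \<open>a y + c z + b w = B\<close> over \<open>\<int>\<close>. Eliminating \<open>x\<close> and \<open>y\<close>
  from the difference of two solutions shows that \<open>a\<close> divides \<open>b\<^sup>2 - c\<^sup>2 m\<close> times the
  differences in \<open>z\<close> and \<open>w\<close>, so by coprimality every solution has the form
  \<open>(xb - b k - c m l, yb - c k - b l, zb + a k, wb + a l)\<close>. As \<open>0 \<le> zb, wb < a\<close>, non-negative
  \<open>z, w\<close> force \<open>k, l \<ge> 0\<close>, hence \<open>x \<le> xb\<close> and \<open>y \<le> yb\<close>; the converse is witnessed by the
  reduced solution itself.\<close>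

lemma int_add_mult_sqrt_eq_0_iff:
  fixes p q m :: int
  assumes "m \<ge> 0" and "\<not> (\<exists>k. m = k\<^sup>2)"
  shows "real_of_int p + real_of_int q * sqrt (real_of_int m) = 0 \<longleftrightarrow> p = 0 \<and> q = 0"
proof
  assume eq: "real_of_int p + real_of_int q * sqrt (real_of_int m) = 0"
  show "p = 0 \<and> q = 0"
  proof (cases "q = 0")
    case True
    with eq show ?thesis by simp
  next
    case False
    have "real_of_int (q\<^sup>2 * m) = (real_of_int q * sqrt (real_of_int m))\<^sup>2"
      using \<open>m \<ge> 0\<close> by (simp add: power_mult_distrib)
    also have "\<dots> = real_of_int (p\<^sup>2)"
      using eq by (simp add: eq_neg_iff_add_eq_0[symmetric])
    finally have sq: "q\<^sup>2 * m = p\<^sup>2"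
      by (simp only: of_int_eq_iff)
    then have "q\<^sup>2 dvd p\<^sup>2"
      by (metis dvd_triv_left)
    then have "q dvd p"
      by simp
    then obtain k where "p = q * k" by blast
    with sq False have "m = k\<^sup>2"
      by (simp add: power_mult_distrib)
    with assms show ?thesis by blast
  qed
qed simp

lemma int_add_mult_sqrt_eq_iff:
  fixes p q p' q' m :: int
  assumes "m \<ge> 0" and "\<not> (\<exists>k. m = k\<^sup>2)"
  shows "real_of_int p + real_of_int q * sqrt (real_of_int m)
           = real_of_int p' + real_of_int q' * sqrt (real_of_int m)
         \<longleftrightarrow> p = p' \<and> q = q'"
  using int_add_mult_sqrt_eq_0_iff[OF assms, of "p - p'" "q - q'"]
  by (auto simp: algebra_simps)

lemma quadratic_integer_equation_iff_linear_system:
  fixes a b c m x y z w A B :: int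
  assumes "m \<ge> 0" and "\<not> (\<exists>k. m = k\<^sup>2)"
  shows "real_of_int a * (real_of_int x + real_of_int y * sqrt (real_of_int m))
           + (real_of_int b + real_of_int c * sqrt (real_of_int m))
             * (real_of_int z + real_of_int w * sqrt (real_of_int m))
           = real_of_int A + real_of_int B * sqrt (real_of_int m)
         \<longleftrightarrow> a * x + b * z + c * m * w = A \<and> a * y + c * z + b * w = B"
proof -
  let ?s = "sqrt (real_of_int m)"
  have "?s * ?s = real_of_int m"
    using \<open>m \<ge> 0\<close> by simp
  then have expand: "real_of_int a * (real_of_int x + real_of_int y * ?s)
               + (real_of_int b + real_of_int c * ?s) * (real_of_int z + real_of_int w * ?s)
             = real_of_int (a * x + b * z + c * m * w) + real_of_int (a * y + c * z + b * w) * ?s"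
    by (simp add: algebra_simps)
  show ?thesis
    unfolding expand int_add_mult_sqrt_eq_iff[OF assms] ..
qed

lemma homogeneous_system_solution:
  fixes a b c m X Y Z W :: int
  assumes "a \<noteq> 0" and "coprime a (b\<^sup>2 - c\<^sup>2 * m)"
    and eq1: "a * X + b * Z + c * m * W = 0" and eq2: "a * Y + c * Z + b * W = 0"
  obtains k l where "Z = a * k" and "W = a * l"
    and "X = - (b * k + c * m * l)" and "Y = - (c * k + b * l)"
proof -
  have eq1': "b * Z + c * m * W = - (a * X)" and eq2': "c * Z + b * W = - (a * Y)"
    using eq1 eq2 by linarith+
  have "(b\<^sup>2 - c\<^sup>2 * m) * Z = b * (b * Z + c * m * W) - c * m * (c * Z + b * W)"
    by (simp add: algebra_simps power2_eq_square)
  also have "\<dots> = a * (c * m * Y - b * X)"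
    unfolding eq1' eq2' by (simp add: algebra_simps)
  finally have "a dvd Z"
    using assms(2) by (metis coprime_dvd_mult_right_iff dvd_triv_left)
  then obtain k where k: "Z = a * k" ..
  have "(b\<^sup>2 - c\<^sup>2 * m) * W = b * (c * Z + b * W) - c * (b * Z + c * m * W)"
    by (simp add: algebra_simps power2_eq_square)
  also have "\<dots> = a * (c * X - b * Y)"
    unfolding eq1' eq2' by (simp add: algebra_simps)
  finally have "a dvd W"
    using assms(2) by (metis coprime_dvd_mult_right_iff dvd_triv_left)
  then obtain l where l: "W = a * l" ..
  have "a * X = a * - (b * k + c * m * l)" and "a * Y = a * - (c * k + b * l)"
    using eq1' eq2' k l by (simp_all add: algebra_simps)
  with \<open>a \<noteq> 0\<close> have "X = - (b * k + c * m * l)" and "Y = - (c * k + b * l)"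
    by simp_all
  with k l that show ?thesis by blast
qed

lemma reduced_solution_dominates:
  fixes a b c m A B x y z w xb yb zb wb :: int
  assumes "a > 0" and "b \<ge> 0" and "c \<ge> 0" and "m \<ge> 0"
    and "coprime a (b\<^sup>2 - c\<^sup>2 * m)"
    and "zb < a" and "wb < a" and "z \<ge> 0" and "w \<ge> 0"
    and "a * x + b * z + c * m * w = A" and "a * y + c * z + b * w = B"
    and "a * xb + b * zb + c * m * wb = A" and "a * yb + c * zb + b * wb = B"
  shows "x \<le> xb \<and> y \<le> yb"
proof -
  have "a * (x - xb) + b * (z - zb) + c * m * (w - wb)
          = (a * x + b * z + c * m * w) - (a * xb + b * zb + c * m * wb)"
   and "a * (y - yb) + c * (z - zb) + b * (w - wb)
          = (a * y + c * z + b * w) - (a * yb + c * zb + b * wb)"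
    by (simp_all add: algebra_simps)
  then have "a * (x - xb) + b * (z - zb) + c * m * (w - wb) = 0"
    and "a * (y - yb) + c * (z - zb) + b * (w - wb) = 0"
    unfolding assms(10-13) by simp_all
  then obtain k l where kl: "z - zb = a * k" "w - wb = a * l"
    and x: "x - xb = - (b * k + c * m * l)" and y: "y - yb = - (c * k + b * l)"
    using homogeneous_system_solution[OF _ assms(5)] \<open>a > 0\<close> by blast
  have "a * -1 < a * k" and "a * -1 < a * l"
    using kl assms(6-9) by linarith+
  then have "k \<ge> 0" and "l \<ge> 0"
    using \<open>a > 0\<close> by (simp_all only: mult_less_cancel_left_pos)
  then have "b * k + c * m * l \<ge> 0" and "c * k + b * l \<ge> 0"
    using assms(2-4) by simp_all
  then show ?thesis
    using x y by linarith
qed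

theorem lemma6:
  fixes a b c m A B xb yb zb wb :: int
  assumes "a > 0" and "b > 0" and "c > 0" and "m > 0"
    and "\<not> (\<exists>k::int. m = k^2)"
    and "gcd a (b^2 - c^2 * m) = 1"
    and "0 \<le> zb" and "zb < a" and "0 \<le> wb" and "wb < a"
    and "real_of_int a * (real_of_int xb + real_of_int yb * sqrt (real_of_int m))
         + (real_of_int b + real_of_int c * sqrt (real_of_int m))
           * (real_of_int zb + real_of_int wb * sqrt (real_of_int m))
         = real_of_int A + real_of_int B * sqrt (real_of_int m)"
  shows "(\<exists>x y z w :: nat.
            real_of_int a * (real x + real y * sqrt (real_of_int m))
            + (real_of_int b + real_of_int c * sqrt (real_of_int m))
              * (real z + real w * sqrt (real_of_int m))
            = real_of_int A + real_of_int B * sqrt (real_of_int m))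
         \<longleftrightarrow> (xb \<ge> 0 \<and> yb \<ge> 0)"
proof -
  note system_iff = quadratic_integer_equation_iff_linear_system[OF less_imp_le[OF assms(4)] assms(5)]
  have coprime: "coprime a (b\<^sup>2 - c\<^sup>2 * m)"
    using assms(6) by (simp add: coprime_iff_gcd_eq_1)
  have reduced: "a * xb + b * zb + c * m * wb = A" "a * yb + c * zb + b * wb = B"
    using assms(11) unfolding system_iff by simp_all
  have reduced_nonneg: "xb \<ge> 0 \<and> yb \<ge> 0"
    if "real_of_int a * (real x + real y * sqrt (real_of_int m))
          + (real_of_int b + real_of_int c * sqrt (real_of_int m))
            * (real z + real w * sqrt (real_of_int m))
        = real_of_int A + real_of_int B * sqrt (real_of_int m)" for x y z w :: nat
  proof -
    have "a * int x + b * int z + c * m * int w = A" "a * int y + c * int z + b * int w = B"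
      using that system_iff[of a "int x" "int y" b c "int z" "int w" A B] by simp_all
    then have "int x \<le> xb \<and> int y \<le> yb"
      by (intro reduced_solution_dominates[OF assms(1) _ _ _ coprime assms(8,10) _ _ _ _ reduced])
        (use assms(2-4) in simp_all)
    then show ?thesis
      by linarith
  qed
  show ?thesis
  proof
    assume "xb \<ge> 0 \<and> yb \<ge> 0"
    then show "\<exists>x y z w :: nat.
            real_of_int a * (real x + real y * sqrt (real_of_int m))
            + (real_of_int b + real_of_int c * sqrt (real_of_int m))
              * (real z + real w * sqrt (real_of_int m))
            = real_of_int A + real_of_int B * sqrt (real_of_int m)"
      using assms(7,9,11)
      by (intro exI[of _ "nat xb"] exI[of _ "nat yb"] exI[of _ "nat zb"] exI[of _ "nat wb"]) simp
  qed (use reduced_nonneg in blast)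
qed

end
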